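(* Let $x_1<x_2$, $u_0\in C^4([x_1,x_2])$ and $u_1\in C^3([x_1,x_2])$. Consider the system for $(R,S,W)(x,t)$: \[ \begin{cases} R_t+2t^2R_x=\dfrac{R-S}{2t}-2t^2\big(u_1'(x)+u_0''(x)t\big),\\[4pt] S_t-2t^2S_x=\dfrac{S-R}{2t}+2t^2\big(u_1'(x)-u_0''(x)t\big),\\[4pt] W_t-2t^2W_x=-2t\big(R+u_1(x)\big), \end{cases} \] with boundary conditions $(R,S,W)(x,0)=(0,0,0)$ and $(R_t,S_t,W_t)(x,0)=(0,0,0)$ for $x\in[x_1,x_2]$. Then there exists a constant $\tilde\delta$ with $0<\tilde\delta\le\sqrt[3]{\frac{3(x_2-x_1)}{4}}$ such that this boundary problem has a classical solution in the region \[ \widetilde D_{\tilde\delta}=\Big\{(x,t):\ 0\le t\le\tilde\delta,\ x_1+\tfrac23t^3\le x\le x_2-\tfrac23t^3\Big\}. \] *)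

theory Defs
  imports "HOL-Analysis.Analysis"
begin

text \<open>u is of class C^k on the closed interval [a,b], and D j is its j-th derivative
  (one-sided at the endpoints), D 0 = u.\<close>
definition Ck_on_interval :: "nat \<Rightarrow> real \<Rightarrow> real \<Rightarrow> (nat \<Rightarrow> real \<Rightarrow> real) \<Rightarrow> bool" where
  "Ck_on_interval k a b D \<longleftrightarrow>
     (\<forall>j<k. \<forall>x\<in>{a..b}. (D j has_real_derivative D (Suc j) x) (at x within {a..b})) \<and>
     (\<forall>j\<le>k. continuous_on {a..b} (D j))"

definition C1_on_region :: "(real \<times> real) set \<Rightarrow> (real \<Rightarrow> real \<Rightarrow> real)
     \<Rightarrow> (real \<Rightarrow> real \<Rightarrow> real) \<Rightarrow> (real \<Rightarrow> real \<Rightarrow> real) \<Rightarrow> bool" where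
  "C1_on_region Dom F Fx Ft \<longleftrightarrow>
     (\<forall>(x,t)\<in>Dom. ((\<lambda>p. F (fst p) (snd p)) has_derivative
                      (\<lambda>h. Fx x t * fst h + Ft x t * snd h)) (at (x,t) within Dom)) \<and>
     continuous_on Dom (\<lambda>p. Fx (fst p) (snd p)) \<and>
     continuous_on Dom (\<lambda>p. Ft (fst p) (snd p))"

definition region_D :: "real \<Rightarrow> real \<Rightarrow> real \<Rightarrow> (real \<times> real) set" where
  "region_D x1 x2 \<delta> = {(x,t). 0 \<le> t \<and> t \<le> \<delta> \<and> x1 + 2/3 * t^3 \<le> x \<and> x \<le> x2 - 2/3 * t^3}"

end

theory Submission
  imports Defs
begin

(*
  With R = t^2 r and S = t^2 s the singular terms (R - S)/(2t) become regular. Along the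
  characteristics x = xi + e (2/3) t^3 (e = 1 or e = -1) of d/dt + 2 e t^2 d/dx one has
  (d/dt + 2 e t^2 d/dx)(t^2 phi) = t g exactly when phi(x, t) is a weighted average of g over the
  characteristic through (x, t) between the times 0 and t, and this averaging operator has norm 1/2
  on bounded continuous functions of (x, t). Hence (r, s) is the fixed point of a contraction of
  ratio 1/2, W is obtained by one more such integration, and the factor t^2 gives the zero initial
  data. All these operators are linear and commute with translations in x, so data with a uniform
  x-derivative produce solutions with an x-derivative; the t-derivative is obtained along the
  characteristics. To have bounded data on the whole plane, u1 and u0' are first extended beyond
  [x1, x2] to bounded functions with bounded derivatives up to order 3, and t is truncated at delta
  in the coefficients.
*)

section \<open>Bounded extension of a C^3 function beyond an interval\<close>

definition sin_deriv :: "nat \<Rightarrow> real \<Rightarrow> real" where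
  "sin_deriv i x = sin (x + real i * pi / 2)"

lemma has_real_derivative_sin_deriv: "(sin_deriv i has_real_derivative sin_deriv (Suc i) x) (at x)"
proof -
  have "sin_deriv (Suc i) x = cos (x + real i * pi / 2)"
    using sin_add[of "x + real i * pi / 2" "pi / 2"] by (simp add: sin_deriv_def algebra_simps add_divide_distrib)
  then show ?thesis
    unfolding sin_deriv_def by (auto intro!: derivative_eq_intros)
qed

lemma abs_sin_deriv_le: "\<bar>sin_deriv i x\<bar> \<le> 1"
  by (simp add: sin_deriv_def abs_sin_le_one)

text \<open>jet_profile c i is the i-th derivative of a bounded smooth function whose derivatives of
  order 0, ..., 3 at 0 are c 0, ..., c 3.\<close>
definition jet_profile :: "(nat \<Rightarrow> real) \<Rightarrow> nat \<Rightarrow> real \<Rightarrow> real" where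
  "jet_profile c i d =
     c 0 * of_bool (i = 0)
   + c 1 * (4/3 * sin_deriv i d - 2^i/6 * sin_deriv i (2*d))
   + c 2 * (of_bool (i = 0) - sin_deriv (Suc i) d)
   + c 3 * (1/3 * sin_deriv i d - 2^i/6 * sin_deriv i (2*d))"

lemma has_real_derivative_jet_profile:
  "(jet_profile c i has_real_derivative jet_profile c (Suc i) d) (at d)"
  unfolding jet_profile_def
  by (auto intro!: derivative_eq_intros has_real_derivative_sin_deriv
      has_real_derivative_sin_deriv[THEN DERIV_chain2] simp: algebra_simps)

lemma jet_profile_at_0: "i \<le> 3 \<Longrightarrow> jet_profile c i 0 = c i"
proof -
  have sin_3pi_half: "sin (pi * 3 / 2) = -1"
    using sin_periodic_pi[of "pi/2"] by (simp add: field_simps)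
  assume "i \<le> 3"
  then consider "i = 0" | "i = 1" | "i = 2" | "i = 3"
    by linarith
  then show ?thesis
    by cases (simp_all add: jet_profile_def sin_deriv_def field_simps sin_3pi_half)
qed

lemma bounded_range_jet_profile: "bounded (range (jet_profile c i))"
proof -
  have scale: "bounded (range (\<lambda>d. a * f d))" if "bounded (range f)" for a and f :: "real \<Rightarrow> real"
    using bounded_scaleR_comp[OF that, of a] by simp
  have "bounded (range (\<lambda>d. sin_deriv j (g d)))" for j g
    using abs_sin_deriv_le by (auto simp: bounded_real)
  from this[of _ id] this show ?thesis
    unfolding jet_profile_def
    by (intro bounded_plus_comp bounded_minus_comp scale) (auto simp: image_constant_conv)
qed

lemma has_real_derivative_if_le:
  fixes f g :: "real \<Rightarrow> real"
  assumes f: "(f has_real_derivative D) (at_left c)" and g: "(g has_real_derivative D) (at_right c)"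
    and "f c = g c"
  shows "((\<lambda>x. if x \<le> c then f x else g x) has_real_derivative D) (at c)"
  unfolding has_field_derivative_iff
proof (rule filterlim_split_at)
  show "((\<lambda>y. ((if y \<le> c then f y else g y) - (if c \<le> c then f c else g c)) / (y - c)) \<longlongrightarrow> D) (at_left c)"
    using f unfolding has_field_derivative_iff
    by (rule Lim_transform_eventually) (auto simp: eventually_at_left_field intro: exI[of _ "c - 1"])
  show "((\<lambda>y. ((if y \<le> c then f y else g y) - (if c \<le> c then f c else g c)) / (y - c)) \<longlongrightarrow> D) (at_right c)"
    using g unfolding has_field_derivative_iff
    by (rule Lim_transform_eventually) (auto simp: eventually_at_right_field \<open>f c = g c\<close> intro: exI[of _ "c + 1"])
qed

lemma has_real_derivative_jet_profile_shift:
  "((\<lambda>x. jet_profile c i (x - a)) has_real_derivative jet_profile c (Suc i) (x - a)) (at x within S)"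
proof -
  have "((\<lambda>x. x - a) has_real_derivative 1) (at x within S)"
    by (auto intro!: derivative_eq_intros)
  from DERIV_chain2[OF has_real_derivative_jet_profile this] show ?thesis by simp
qed

definition extend_right :: "real \<Rightarrow> (nat \<Rightarrow> real \<Rightarrow> real) \<Rightarrow> nat \<Rightarrow> real \<Rightarrow> real" where
  "extend_right b f i x = (if x \<le> b then f i x else jet_profile (\<lambda>j. f j b) i (x - b))"

definition bounded_extension :: "real \<Rightarrow> real \<Rightarrow> (nat \<Rightarrow> real \<Rightarrow> real) \<Rightarrow> nat \<Rightarrow> real \<Rightarrow> real" where
  "bounded_extension a b f i x = (if x \<le> a then jet_profile (\<lambda>j. f j a) i (x - a) else extend_right b f i x)"

lemma bounded_extension_eq: "i \<le> 3 \<Longrightarrow> x \<in> {a..b} \<Longrightarrow> bounded_extension a b f i x = f i x"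
  by (auto simp: bounded_extension_def extend_right_def jet_profile_at_0)

lemma has_real_derivative_extend_right:
  assumes "a < b" "Ck_on_interval 3 a b f" "i < 3" "a < x"
  shows "(extend_right b f i has_real_derivative extend_right b f (Suc i) x) (at x)"
proof -
  have f: "(f i has_real_derivative f (Suc i) y) (at y within {a..b})" if "y \<in> {a..b}" for y
    using assms(2,3) that unfolding Ck_on_interval_def by blast
  consider "x < b" | "x = b" | "b < x"
    by linarith
  then show ?thesis
  proof cases
    case 1
    then have "(f i has_real_derivative extend_right b f (Suc i) x) (at x)"
      using f[of x] assms(4) by (simp add: at_within_Icc_at extend_right_def)
    then show ?thesis
      by (rule has_field_derivative_transform_within_open[where S="{..<b}"]) (use 1 in \<open>auto simp: extend_right_def\<close>)
  next
    case 2
    have "(extend_right b f i has_real_derivative f (Suc i) b) (at b)"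
      unfolding extend_right_def
      using f[of b] has_real_derivative_jet_profile_shift[of "\<lambda>j. f j b" i b b "{b<..}"] assms
      by (intro has_real_derivative_if_le) (auto simp: at_within_Icc_at_left jet_profile_at_0)
    then show ?thesis
      using 2 by (simp add: extend_right_def)
  next
    case 3
    then have "((\<lambda>y. jet_profile (\<lambda>j. f j b) i (y - b)) has_real_derivative extend_right b f (Suc i) x) (at x)"
      using has_real_derivative_jet_profile_shift by (simp add: extend_right_def)
    then show ?thesis
      by (rule has_field_derivative_transform_within_open[where S="{b<..}"]) (use 3 in \<open>auto simp: extend_right_def\<close>)
  qed
qed

lemma has_real_derivative_extend_right_at_right:
  assumes "a < b" "Ck_on_interval 3 a b f" "i < 3"
  shows "(extend_right b f i has_real_derivative f (Suc i) a) (at_right a)"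
proof -
  have ev: "\<forall>\<^sub>F y in at_right a. f i y = extend_right b f i y"
    using assms(1) by (auto simp: extend_right_def eventually_at_right_field intro!: exI[of _ b])
  have "f i a = extend_right b f i a"
    using assms(1) by (simp add: extend_right_def)
  moreover have "(f i has_real_derivative f (Suc i) a) (at a within {a..b})"
    using assms unfolding Ck_on_interval_def by auto
  ultimately show ?thesis
    using has_field_derivative_cong_eventually[OF ev] by (simp add: at_within_Icc_at_right[OF assms(1)])
qed

lemma has_real_derivative_bounded_extension:
  assumes "a < b" "Ck_on_interval 3 a b f" "i < 3"
  shows "(bounded_extension a b f i has_real_derivative bounded_extension a b f (Suc i) x) (at x)"
proof -
  consider "x < a" | "x = a" | "a < x"
    by linarith
  then show ?thesis
  proof cases
    case 1
    then have "((\<lambda>y. jet_profile (\<lambda>j. f j a) i (y - a)) has_real_derivative bounded_extension a b f (Suc i) x) (at x)"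
      using has_real_derivative_jet_profile_shift by (simp add: bounded_extension_def)
    then show ?thesis
      by (rule has_field_derivative_transform_within_open[where S="{..<a}"])
        (use 1 in \<open>auto simp: bounded_extension_def\<close>)
  next
    case 2
    have "(bounded_extension a b f i has_real_derivative f (Suc i) a) (at a)"
      unfolding bounded_extension_def
    proof (rule has_real_derivative_if_le)
      show "((\<lambda>y. jet_profile (\<lambda>j. f j a) i (y - a)) has_real_derivative f (Suc i) a) (at_left a)"
        using has_real_derivative_jet_profile_shift[of "\<lambda>j. f j a" i a a "{..<a}"] assms(3)
        by (simp add: jet_profile_at_0)
      show "(extend_right b f i has_real_derivative f (Suc i) a) (at_right a)"
        by (rule has_real_derivative_extend_right_at_right[OF assms])
    qed (use assms in \<open>simp add: extend_right_def jet_profile_at_0\<close>)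
    then show ?thesis
      using 2 assms by (simp add: bounded_extension_eq)
  next
    case 3
    then have "(extend_right b f i has_real_derivative bounded_extension a b f (Suc i) x) (at x)"
      using has_real_derivative_extend_right[OF assms 3] by (simp add: bounded_extension_def)
    then show ?thesis
      by (rule has_field_derivative_transform_within_open[where S="{a<..}"])
        (use 3 in \<open>auto simp: bounded_extension_def\<close>)
  qed
qed

lemma bounded_range_bounded_extension:
  assumes "Ck_on_interval 3 a b f" "i \<le> 3"
  shows "bounded (range (bounded_extension a b f i))"
proof -
  have "compact (f i ` {a..b})"
    using assms unfolding Ck_on_interval_def by (intro compact_continuous_image) auto
  then have "bounded (f i ` {a..b} \<union> range (jet_profile (\<lambda>j. f j a) i) \<union> range (jet_profile (\<lambda>j. f j b) i))"
    by (simp add: compact_imp_bounded bounded_range_jet_profile)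
  then show ?thesis
    by (rule bounded_subset) (auto simp: bounded_extension_def extend_right_def)
qed

section \<open>Translations and x-derivatives of bounded continuous functions\<close>

type_synonym bcfun = "(real \<times> real) \<Rightarrow>\<^sub>C real"

lemma abs_apply_bcontfun_le: "\<bar>apply_bcontfun f p\<bar> \<le> norm f"
  using norm_bounded[of f p] by simp

context includes bcontfun.lifting
begin

lift_definition shift_x :: "real \<Rightarrow> bcfun \<Rightarrow> bcfun" is "\<lambda>h f p. f (fst p + h, snd p)"
proof -
  fix h and f :: "real \<times> real \<Rightarrow> real"
  assume "f \<in> bcontfun"
  then show "(\<lambda>p. f (fst p + h, snd p)) \<in> bcontfun"
    unfolding bcontfun_def
    by (auto intro!: continuous_intros continuous_on_compose2[of UNIV f] elim: bounded_subset)
qed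

end

lemma shift_x_apply [simp]: "shift_x h f p = f (fst p + h, snd p)"
  by (simp add: shift_x.rep_eq)

definition has_x_derivative :: "bcfun \<Rightarrow> bcfun \<Rightarrow> bool" where
  "has_x_derivative f f' \<longleftrightarrow> ((\<lambda>h. (1 / h) *\<^sub>R (shift_x h f - f)) \<longlongrightarrow> f') (at 0)"

lemma has_x_derivative_bounded_linear_pair:
  fixes L :: "bcfun \<times> bcfun \<Rightarrow> bcfun"
  assumes "bounded_linear L" and shift: "\<And>h a b. L (shift_x h a, shift_x h b) = shift_x h (L (a, b))"
    and "has_x_derivative a a'" "has_x_derivative b b'"
  shows "has_x_derivative (L (a, b)) (L (a', b'))"
proof -
  interpret L: bounded_linear L by fact
  have quotient: "(1 / h) *\<^sub>R (shift_x h (L (a, b)) - L (a, b))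
      = L ((1 / h) *\<^sub>R (shift_x h a - a), (1 / h) *\<^sub>R (shift_x h b - b))" for h
  proof -
    have "((1 / h) *\<^sub>R (shift_x h a - a), (1 / h) *\<^sub>R (shift_x h b - b))
        = (1 / h) *\<^sub>R ((shift_x h a, shift_x h b) - (a, b))"
      by (simp only: scaleR_Pair diff_Pair)
    then show ?thesis
      by (simp only: L.diff L.scaleR shift)
  qed
  have "((\<lambda>h. ((1 / h) *\<^sub>R (shift_x h a - a), (1 / h) *\<^sub>R (shift_x h b - b))) \<longlongrightarrow> (a', b')) (at 0)"
    using assms(3,4) unfolding has_x_derivative_def by (rule tendsto_Pair)
  then show ?thesis
    unfolding has_x_derivative_def quotient by (rule L.tendsto)
qed

lemma has_x_derivative_bounded_linear:
  assumes "bounded_linear L" and "\<And>h f. L (shift_x h f) = shift_x h (L f)"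
    and "has_x_derivative f f'"
  shows "has_x_derivative (L f) (L f')"
proof -
  have "has_x_derivative ((\<lambda>p. L (fst p)) (f, f)) ((\<lambda>p. L (fst p)) (f', f'))"
    by (rule has_x_derivative_bounded_linear_pair)
      (use assms in \<open>simp_all add: bounded_linear_compose[OF assms(1) bounded_linear_fst]\<close>)
  then show ?thesis
    by simp
qed

lemma shift_x_plus: "shift_x h (f + g) = shift_x h f + shift_x h g"
  and shift_x_minus: "shift_x h (f - g) = shift_x h f - shift_x h g"
  and shift_x_scaleR: "shift_x h (c *\<^sub>R f) = c *\<^sub>R shift_x h f"
  by (simp_all add: bcontfun_eqI)

lemma has_x_derivative_add:
  assumes "has_x_derivative f f'" "has_x_derivative g g'"
  shows "has_x_derivative (f + g) (f' + g')"
proof -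
  have "has_x_derivative ((\<lambda>p. fst p + snd p) (f, g)) ((\<lambda>p. fst p + snd p) (f', g'))"
    by (rule has_x_derivative_bounded_linear_pair)
      (use assms in \<open>simp_all add: bounded_linear_add bounded_linear_fst bounded_linear_snd shift_x_plus\<close>)
  then show ?thesis
    by simp
qed

lemma has_x_derivative_diff:
  assumes "has_x_derivative f f'" "has_x_derivative g g'"
  shows "has_x_derivative (f - g) (f' - g')"
proof -
  have "has_x_derivative ((\<lambda>p. fst p - snd p) (f, g)) ((\<lambda>p. fst p - snd p) (f', g'))"
    by (rule has_x_derivative_bounded_linear_pair)
      (use assms in \<open>simp_all add: bounded_linear_sub bounded_linear_fst bounded_linear_snd shift_x_minus\<close>)
  then show ?thesis
    by simp
qed

lemma has_x_derivative_scaleR: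
  "has_x_derivative f f' \<Longrightarrow> has_x_derivative (c *\<^sub>R f) (c *\<^sub>R f')"
  by (rule has_x_derivative_bounded_linear) (auto intro: bounded_linear_scaleR_right simp: shift_x_scaleR)

lemma has_x_derivative_imp_has_real_derivative:
  assumes "has_x_derivative f f'"
  shows "((\<lambda>y. f (y, t)) has_real_derivative f' (x, t)) (at x)"
proof -
  let ?Q = "\<lambda>h. (1 / h) *\<^sub>R (shift_x h f - f) - f'"
  have "((\<lambda>h. norm (?Q h)) \<longlongrightarrow> 0) (at 0)"
    using assms unfolding has_x_derivative_def by (intro tendsto_norm_zero LIM_zero)
  moreover have "\<forall>\<^sub>F h in at 0. norm ((f (x + h, t) - f (x, t)) / h - f' (x, t)) \<le> norm (?Q h)"
    using norm_bounded[of "?Q _" "(x, t)"] by (simp add: divide_inverse_commute)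
  ultimately have "((\<lambda>h. (f (x + h, t) - f (x, t)) / h - f' (x, t)) \<longlongrightarrow> 0) (at 0)"
    by (rule Lim_null_comparison[rotated])
  then show ?thesis
    unfolding DERIV_def by (rule LIM_zero_cancel)
qed

lemma abs_first_order_remainder_le:
  fixes g :: "real \<Rightarrow> real"
  assumes g: "\<And>z. (g has_real_derivative g' z) (at z)" and g': "\<And>z. (g' has_real_derivative g'' z) (at z)"
    and M: "\<And>z. \<bar>g'' z\<bar> \<le> M"
  shows "\<bar>g (y + h) - g y - h * g' y\<bar> \<le> M * h^2"
proof -
  have lip: "\<bar>g' z - g' y\<bar> \<le> M * \<bar>z - y\<bar>" for z
    using field_differentiable_bound[of UNIV g' g'' M z y] g' M by (simp add: has_field_derivative_at_within)
  have "M \<ge> 0"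
    using M[of 0] by linarith
  let ?S = "closed_segment y (y + h)"
  have "norm ((g (y + h) - (y + h) * g' y) - (g y - y * g' y)) \<le> (M * \<bar>h\<bar>) * norm ((y + h) - y)"
  proof (rule field_differentiable_bound[of ?S _ "\<lambda>z. g' z - g' y"])
    show "((\<lambda>z. g z - z * g' y) has_real_derivative g' z - g' y) (at z within ?S)" for z
      by (auto intro!: derivative_eq_intros g[THEN has_field_derivative_at_within])
    show "norm (g' z - g' y) \<le> M * \<bar>h\<bar>" if "z \<in> ?S" for z
      using lip[of z] segment_bound1[OF that] \<open>M \<ge> 0\<close> by (auto intro: order_trans mult_left_mono)
  qed auto
  then show ?thesis
    by (simp add: algebra_simps power2_eq_square abs_mult)
qed

definition lift_x :: "(real \<Rightarrow> real) \<Rightarrow> bcfun" where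
  "lift_x g = Bcontfun (\<lambda>(x, t). g x)"

lemma lift_x_apply:
  assumes "continuous_on UNIV g" "bounded (range g)"
  shows "lift_x g (x, t) = g x"
proof -
  have bc: "(\<lambda>(x, t). g x) \<in> bcontfun"
    using assms unfolding bcontfun_def
    by (auto simp: split_beta intro!: continuous_intros continuous_on_compose2[OF assms(1)]
        elim!: bounded_subset)
  then show ?thesis
    by (simp add: lift_x_def Bcontfun_inverse[OF bc])
qed

lemma has_x_derivative_lift_x:
  fixes g :: "real \<Rightarrow> real"
  assumes g: "\<And>z. (g has_real_derivative g' z) (at z)" and g': "\<And>z. (g' has_real_derivative g'' z) (at z)"
    and bounded: "bounded (range g)" "bounded (range g')" "bounded (range g'')"
  shows "has_x_derivative (lift_x g) (lift_x g')"
proof -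
  obtain M where M: "\<And>z. \<bar>g'' z\<bar> \<le> M"
    using bounded(3) by (auto simp: bounded_real)
  have cont: "continuous_on UNIV g" "continuous_on UNIV g'"
    using g g' by (auto intro!: continuous_at_imp_continuous_on DERIV_isCont)
  have "norm ((1 / h) *\<^sub>R (shift_x h (lift_x g) - lift_x g) - lift_x g') \<le> M * \<bar>h\<bar>" if "h \<noteq> 0" for h
  proof (rule norm_bound)
    fix p :: "real \<times> real"
    obtain x t where p: "p = (x, t)" by fastforce
    have "((1 / h) *\<^sub>R (shift_x h (lift_x g) - lift_x g) - lift_x g') p = (g (x + h) - g x) / h - g' x"
      by (simp add: p lift_x_apply cont bounded divide_inverse_commute)
    also have "\<dots> = (g (x + h) - g x - h * g' x) / h"
      using that by (simp add: field_simps)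
    finally have "norm (((1 / h) *\<^sub>R (shift_x h (lift_x g) - lift_x g) - lift_x g') p)
        = \<bar>g (x + h) - g x - h * g' x\<bar> / \<bar>h\<bar>"
      by simp
    also have "\<dots> \<le> M * h^2 / \<bar>h\<bar>"
      by (intro divide_right_mono abs_first_order_remainder_le[OF g g' M]) simp
    also have "\<dots> = M * \<bar>h\<bar>"
    proof -
      have "h^2 / \<bar>h\<bar> = \<bar>h\<bar>"
        using that by (simp add: power2_eq_square divide_simps)
      then show ?thesis
        by (metis times_divide_eq_right)
    qed
    finally show "norm (((1 / h) *\<^sub>R (shift_x h (lift_x g) - lift_x g) - lift_x g') p) \<le> M * \<bar>h\<bar>" .
  qed
  then have "\<forall>\<^sub>F h in at 0. norm ((1 / h) *\<^sub>R (shift_x h (lift_x g) - lift_x g) - lift_x g') \<le> M * \<bar>h\<bar>"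
    by (auto simp: eventually_at_filter)
  moreover have "((\<lambda>h. M * \<bar>h\<bar>) \<longlongrightarrow> 0) (at 0)"
    by (intro tendsto_mult_right_zero tendsto_rabs_zero tendsto_ident_at)
  ultimately show ?thesis
    unfolding has_x_derivative_def by (rule Lim_null_comparison[THEN LIM_zero_cancel])
qed

text \<open>Truncating t to [0, \<delta>] keeps the multiplier t^n bounded.\<close>
definition tpow_mult :: "real \<Rightarrow> nat \<Rightarrow> bcfun \<Rightarrow> bcfun" where
  "tpow_mult \<delta> n f = Bcontfun (\<lambda>p. (max 0 (min (snd p) \<delta>))^n * f p)"

lemma abs_tpow_mult_le: "\<bar>(max 0 (min t \<delta>))^n * apply_bcontfun f p\<bar> \<le> (max 0 \<delta>)^n * norm f"
proof -
  have "\<bar>max 0 (min t \<delta>)\<bar>^n \<le> (max 0 \<delta>)^n"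
    by (intro power_mono) auto
  then show ?thesis
    unfolding abs_mult power_abs by (rule mult_mono) (auto simp: abs_apply_bcontfun_le)
qed

lemma tpow_mult_apply: "tpow_mult \<delta> n f p = (max 0 (min (snd p) \<delta>))^n * f p"
proof -
  have bc: "(\<lambda>p. (max 0 (min (snd p) \<delta>))^n * f p) \<in> bcontfun"
    by (intro bcontfun_normI[where b="(max 0 \<delta>)^n * norm f"]) (auto simp: abs_tpow_mult_le intro!: continuous_intros)
  then show ?thesis
    by (simp add: tpow_mult_def Bcontfun_inverse[OF bc])
qed

lemma has_x_derivative_tpow_mult:
  assumes "has_x_derivative f f'"
  shows "has_x_derivative (tpow_mult \<delta> n f) (tpow_mult \<delta> n f')"
proof (rule has_x_derivative_bounded_linear[OF _ _ assms])
  show "bounded_linear (tpow_mult \<delta> n)"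
  proof (rule bounded_linear_intro[where K="(max 0 \<delta>)^n"])
    show "tpow_mult \<delta> n (f + g) = tpow_mult \<delta> n f + tpow_mult \<delta> n g" for f g
      by (rule bcontfun_eqI) (simp add: tpow_mult_apply algebra_simps)
    show "tpow_mult \<delta> n (c *\<^sub>R f) = c *\<^sub>R tpow_mult \<delta> n f" for c f
      by (rule bcontfun_eqI) (simp add: tpow_mult_apply)
    show "norm (tpow_mult \<delta> n f) \<le> norm f * (max 0 \<delta>)^n" for f
    proof (rule norm_bound)
      fix p :: "real \<times> real"
      show "norm (tpow_mult \<delta> n f p) \<le> norm f * (max 0 \<delta>)^n"
        using abs_tpow_mult_le[of "snd p" \<delta> n f p] by (simp add: tpow_mult_apply mult.commute)
    qed
  qed
  show "tpow_mult \<delta> n (shift_x h f) = shift_x h (tpow_mult \<delta> n f)" for h f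
    by (rule bcontfun_eqI) (simp add: tpow_mult_apply)
qed

section \<open>Integration along characteristics\<close>

lemma integral_stretch_weighted:
  fixes \<psi> :: "real \<Rightarrow> real"
  assumes "t \<ge> 0"
  shows "t^2 * integral {0..1} (\<lambda>v. v * \<psi> (t * v)) = integral {0..t} (\<lambda>s. s * \<psi> s)"
proof (cases "t = 0")
  case False
  with assms have "t > 0" by simp
  have "t * integral {0..1} (\<lambda>v. v * \<psi> (t * v)) = integral {0..1} (\<lambda>v. t * v * \<psi> (t * v))"
    by (simp flip: integral_mult_right add: mult.assoc)
  also have "\<dots> = (1 / t) * integral {0..t} (\<lambda>s. s * \<psi> s)"
    using integral_stretch_real[of t 0 t "\<lambda>s. s * \<psi> s"] \<open>t > 0\<close> by simp
  finally show ?thesis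
    using \<open>t > 0\<close> by (simp add: power2_eq_square field_simps)
qed simp

definition tau :: "real \<Rightarrow> real" where
  "tau t = 2/3 * t^3"

lemma continuous_on_char_integrand:
  assumes "continuous_on UNIV g"
  shows "continuous_on (UNIV \<times> {0..1})
    (\<lambda>(p, v). v * g (fst p - e * (tau (snd p) - tau (snd p * v)), snd p * v))"
  unfolding tau_def
  by (auto simp: split_beta intro!: continuous_intros continuous_on_compose2[OF assms])

lemma abs_char_integral_le:
  assumes "continuous_on UNIV g" "\<And>p. \<bar>g p\<bar> \<le> B"
  shows "\<bar>integral {0..1} (\<lambda>v. v * g (x - e * (tau t - tau (t * v)), t * v))\<bar> \<le> B / 2"
proof -
  have "norm (integral {0..1} (\<lambda>v. v * g (x - e * (tau t - tau (t * v)), t * v))) \<le> integral {0..1} (\<lambda>v. B * v)"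
  proof (rule integral_norm_bound_integral)
    show "(\<lambda>v. v * g (x - e * (tau t - tau (t * v)), t * v)) integrable_on {0..1}"
      unfolding tau_def
      by (intro integrable_continuous_interval continuous_intros continuous_on_compose2[OF assms(1)]) auto
    show "norm (v * g (x - e * (tau t - tau (t * v)), t * v)) \<le> B * v" if "v \<in> {0..1}" for v
    proof -
      have "v * \<bar>g (x - e * (tau t - tau (t * v)), t * v)\<bar> \<le> v * B"
        using assms(2) that by (intro mult_left_mono) auto
      then show ?thesis
        using that by (simp add: abs_mult mult.commute)
    qed
  qed (auto intro: integrable_continuous_interval continuous_intros)
  also have "integral {0..1} (\<lambda>v. B * v) = B / 2"
    using integral_power[of 1 0 1] by simp
  finally show ?thesis by simp
qed

context includes bcontfun.lifting
begin

text \<open>For e = 1 and e = -1, the curves x = \<xi> + e * tau t are the characteristics of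
  d/dt + 2 e t^2 d/dx. By integral_stretch_weighted, t^2 * char_integral e g (x, t) is the integral of
  s * g along the characteristic through (x, t) from time 0 to t.\<close>
lift_definition char_integral :: "real \<Rightarrow> bcfun \<Rightarrow> bcfun" is
  "\<lambda>e g (x, t). integral {0..1} (\<lambda>v. v * g (x - e * (tau t - tau (t * v)), t * v))"
proof -
  fix e and g :: "real \<times> real \<Rightarrow> real"
  assume "g \<in> bcontfun"
  then obtain B where g: "continuous_on UNIV g" "\<And>p. \<bar>g p\<bar> \<le> B"
    by (auto simp: bcontfun_def bounded_real)
  show "(\<lambda>(x, t). integral {0..1} (\<lambda>v. v * g (x - e * (tau t - tau (t * v)), t * v))) \<in> bcontfun"
  proof (rule bcontfun_normI)
    have "continuous_on UNIV (\<lambda>p. integral (cbox 0 1)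
        (\<lambda>v. v * g (fst p - e * (tau (snd p) - tau (snd p * v)), snd p * v)))"
      by (rule integral_continuous_on_param)
        (use continuous_on_char_integrand[OF g(1), of e] in \<open>simp add: cbox_interval\<close>)
    then show "continuous_on UNIV (\<lambda>(x, t). integral {0..1} (\<lambda>v. v * g (x - e * (tau t - tau (t * v)), t * v)))"
      by (simp add: split_beta cbox_interval)
    fix p :: "real \<times> real"
    show "norm ((\<lambda>(x, t). integral {0..1} (\<lambda>v. v * g (x - e * (tau t - tau (t * v)), t * v))) p) \<le> B / 2"
      using abs_char_integral_le[OF g, of "fst p" e "snd p"] by (simp add: split_beta)
  qed
qed

end

lemma char_integral_apply:
  "char_integral e g (x, t) = integral {0..1} (\<lambda>v. v * g (x - e * (tau t - tau (t * v)), t * v))"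
  by (simp add: char_integral.rep_eq)

lemma norm_char_integral_le: "norm (char_integral e g) \<le> norm g / 2"
proof (rule norm_bound)
  fix p :: "real \<times> real"
  show "norm (char_integral e g p) \<le> norm g / 2"
    using abs_char_integral_le[OF continuous_on_apply_bcontfun abs_apply_bcontfun_le]
    by (simp add: char_integral.rep_eq split_beta)
qed

lemma bounded_linear_char_integral: "bounded_linear (char_integral e)"
proof (rule bounded_linear_intro[where K="1/2"])
  have int: "(\<lambda>v. v * f (x - e * (tau t - tau (t * v)), t * v)) integrable_on {0..1}" for f :: bcfun and x t
    unfolding tau_def
    by (intro integrable_continuous_interval continuous_intros continuous_on_compose2[OF continuous_on_apply_bcontfun]) auto
  show "char_integral e (f + g) = char_integral e f + char_integral e g" for f g
    by (rule bcontfun_eqI) (auto simp: char_integral_apply distrib_left integral_add[OF int int])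
  show "char_integral e (c *\<^sub>R f) = c *\<^sub>R char_integral e f" for c f
    by (rule bcontfun_eqI) (auto simp: char_integral_apply mult.left_commute[of _ c])
  show "norm (char_integral e f) \<le> norm f * (1/2)" for f
    using norm_char_integral_le[of e f] by simp
qed

lemma char_integral_shift_x: "char_integral e (shift_x h g) = shift_x h (char_integral e g)"
  by (rule bcontfun_eqI) (auto simp: char_integral_apply algebra_simps)

lemma has_x_derivative_char_integral:
  "has_x_derivative g g' \<Longrightarrow> has_x_derivative (char_integral e g) (char_integral e g')"
  by (rule has_x_derivative_bounded_linear[OF bounded_linear_char_integral char_integral_shift_x])

lemma has_derivative_in_characteristic_coordinates:
  fixes F Fx D c :: "real \<Rightarrow> _"
  assumes Fx: "\<And>x t. t \<in> {0..\<delta>} \<Longrightarrow> ((\<lambda>y. F y t) has_real_derivative Fx x t) (at x)"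
    and D: "\<And>x t. t \<in> {0..\<delta>} \<Longrightarrow>
      ((\<lambda>s. F (x - c t + c s) s) has_real_derivative D x t) (at t within {0..\<delta>})"
    and c_cont: "continuous_on UNIV c"
    and D_cont: "continuous_on (UNIV \<times> {0..\<delta>}) (\<lambda>p. D (fst p) (snd p))"
    and t: "t \<in> {0..\<delta>}"
  shows "((\<lambda>(\<xi>, s). F (\<xi> + c s) s) has_derivative (\<lambda>(a, b). Fx (\<xi> + c t) t * a + D (\<xi> + c t) t * b))
    (at (\<xi>, t) within UNIV \<times> {0..\<delta>})"
proof -
  let ?S = "UNIV \<times> {0..\<delta>} :: (real \<times> real) set"
  have "continuous_on ?S (\<lambda>p. (fst p + c (snd p), snd p))"
    by (intro continuous_intros continuous_on_compose2[OF c_cont]) auto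
  moreover have "(\<lambda>p. (fst p + c (snd p), snd p)) ` ?S \<subseteq> ?S"
    by auto
  ultimately have D_char_cont: "continuous_on ?S (\<lambda>p. D (fst p + c (snd p)) (snd p))"
    using continuous_on_compose2[OF D_cont, of ?S "\<lambda>p. (fst p + c (snd p), snd p)"] by simp
  have "continuous_on ?S (\<lambda>p. blinfun_mult_right (D (fst p + c (snd p)) (snd p)))"
    by (rule continuous_on_compose2[OF _ D_char_cont, of UNIV])
      (auto intro: linear_continuous_on bounded_linear_blinfun_mult_right)
  then have "continuous (at (\<xi>, t) within ?S) (\<lambda>(x, y). blinfun_mult_right (D (x + c y) y))"
    using t by (simp add: case_prod_beta' continuous_on_eq_continuous_within)
  moreover have "((\<lambda>\<xi>. F (\<xi> + c t) t) has_derivative (*) (Fx (\<xi> + c t) t)) (at \<xi> within UNIV)"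
    using Fx[OF t, of "\<xi> + c t"] DERIV_shift[of "\<lambda>y. F y t" "Fx (\<xi> + c t) t" \<xi> "c t"]
    by (simp add: has_field_derivative_def)
  moreover have "((\<lambda>s. F (\<xi>' + c s) s) has_derivative blinfun_apply (blinfun_mult_right (D (\<xi>' + c s) s)))
      (at s within {0..\<delta>})" if "s \<in> {0..\<delta>}" for \<xi>' s
    using D[OF that, of "\<xi>' + c s"] by (simp add: has_field_derivative_def)
  ultimately have "((\<lambda>(\<xi>, s). F (\<xi> + c s) s) has_derivative
      (\<lambda>(a, b). Fx (\<xi> + c t) t * a + blinfun_apply (blinfun_mult_right (D (\<xi> + c t) t)) b))
      (at (\<xi>, t) within ?S)"
    by (intro has_derivative_partialsI) (use t in auto)
  then show ?thesis
    by simp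
qed

lemma C1_on_region_from_characteristics:
  fixes F Fx D c c' :: "real \<Rightarrow> _"
  assumes Fx: "\<And>x t. t \<in> {0..\<delta>} \<Longrightarrow> ((\<lambda>y. F y t) has_real_derivative Fx x t) (at x)"
    and D: "\<And>x t. t \<in> {0..\<delta>} \<Longrightarrow>
      ((\<lambda>s. F (x - c t + c s) s) has_real_derivative D x t) (at t within {0..\<delta>})"
    and c: "\<And>t. (c has_real_derivative c' t) (at t)"
    and Fx_cont: "continuous_on (UNIV \<times> {0..\<delta>}) (\<lambda>p. Fx (fst p) (snd p))"
    and D_cont: "continuous_on (UNIV \<times> {0..\<delta>}) (\<lambda>p. D (fst p) (snd p))"
    and c'_cont: "continuous_on UNIV c'"
  shows "C1_on_region (UNIV \<times> {0..\<delta>}) F Fx (\<lambda>x t. D x t - c' t * Fx x t)"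
proof -
  let ?S = "UNIV \<times> {0..\<delta>} :: (real \<times> real) set"
  have c_cont: "continuous_on UNIV c"
    using c by (intro continuous_at_imp_continuous_on ballI DERIV_isCont)
  define G' where "G' p = (\<lambda>(a, b). Fx (fst p + c (snd p)) (snd p) * a + D (fst p + c (snd p)) (snd p) * b)"
    for p :: "real \<times> real"
  have G: "((\<lambda>(\<xi>, s). F (\<xi> + c s) s) has_derivative G' p) (at p within ?S)" if "p \<in> ?S" for p
    using has_derivative_in_characteristic_coordinates[OF Fx D c_cont D_cont, of "snd p" "fst p"] that
    by (cases p) (simp add: G'_def)
  define \<Psi> where "\<Psi> p = (fst p - c (snd p), snd p)" for p :: "real \<times> real"
  have \<Psi>: "(\<Psi> has_derivative (\<lambda>h. (fst h - c' t * snd h, snd h))) (at (x, t) within ?S)" for x t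
  proof -
    have "((\<lambda>p. c (snd p)) has_derivative (\<lambda>h. c' t * snd h)) (at (x, t) within ?S)"
      using has_derivative_compose[of snd snd "(x, t)" ?S c "(*) (c' t)"] c[of t]
      by (simp add: has_field_derivative_def bounded_linear_imp_has_derivative bounded_linear_snd)
    then show ?thesis
      unfolding \<Psi>_def[abs_def] by (auto intro!: derivative_eq_intros)
  qed
  have "((\<lambda>p. F (fst p) (snd p)) has_derivative (\<lambda>h. Fx x t * fst h + (D x t - c' t * Fx x t) * snd h))
      (at (x, t) within ?S)" if "t \<in> {0..\<delta>}" for x t
  proof -
    have "((\<lambda>p. (\<lambda>(\<xi>, s). F (\<xi> + c s) s) (\<Psi> p)) has_derivative
        (\<lambda>h. G' (\<Psi> (x, t)) (fst h - c' t * snd h, snd h))) (at (x, t) within ?S)"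
      by (rule has_derivative_in_compose2[OF G _ _ \<Psi>]) (use that in \<open>auto simp: \<Psi>_def\<close>)
    then show ?thesis
      by (simp add: \<Psi>_def G'_def algebra_simps)
  qed
  moreover have "continuous_on ?S (\<lambda>p. D (fst p) (snd p) - c' (snd p) * Fx (fst p) (snd p))"
    by (intro continuous_intros D_cont Fx_cont continuous_on_compose2[OF c'_cont]) auto
  ultimately show ?thesis
    unfolding C1_on_region_def using Fx_cont by auto
qed

lemma C1_on_region_char_integral:
  assumes "has_x_derivative (char_integral e g) \<phi>"
  shows "C1_on_region (UNIV \<times> {0..\<delta>}) (\<lambda>x t. t^2 * char_integral e g (x, t)) (\<lambda>x t. t^2 * \<phi> (x, t))
    (\<lambda>x t. t * g (x, t) - 2 * e * t^2 * (t^2 * \<phi> (x, t)))"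
proof (rule C1_on_region_from_characteristics[where c="\<lambda>t. e * tau t"])
  show "((\<lambda>y. t^2 * char_integral e g (y, t)) has_real_derivative t^2 * \<phi> (x, t)) (at x)" for x t
    using has_x_derivative_imp_has_real_derivative[OF assms] by (rule DERIV_cmult)
  show "((\<lambda>s. s^2 * char_integral e g (x - e * tau t + e * tau s, s)) has_real_derivative t * g (x, t))
      (at t within {0..\<delta>})" if "t \<in> {0..\<delta>}" for x t
  proof -
    let ?\<xi> = "x - e * tau t"
    have along: "s^2 * char_integral e g (?\<xi> + e * tau s, s) = integral {0..s} (\<lambda>\<sigma>. \<sigma> * g (?\<xi> + e * tau \<sigma>, \<sigma>))"
      if "s \<ge> 0" for s
    proof -
      have "(\<lambda>v. v * g (?\<xi> + e * tau s - e * (tau s - tau (s * v)), s * v))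
          = (\<lambda>v. v * g (?\<xi> + e * tau (s * v), s * v))"
        by (simp add: algebra_simps)
      then show ?thesis
        unfolding char_integral_apply
        using integral_stretch_weighted[OF that, of "\<lambda>\<sigma>. g (?\<xi> + e * tau \<sigma>, \<sigma>)"] by simp
    qed
    have "continuous_on {0..\<delta>} (\<lambda>\<sigma>. \<sigma> * g (?\<xi> + e * tau \<sigma>, \<sigma>))"
      unfolding tau_def by (intro continuous_intros continuous_on_compose2[OF continuous_on_apply_bcontfun]) auto
    from integral_has_real_derivative[OF this that]
    have "((\<lambda>s. integral {0..s} (\<lambda>\<sigma>. \<sigma> * g (?\<xi> + e * tau \<sigma>, \<sigma>))) has_real_derivative t * g (x, t))
        (at t within {0..\<delta>})"
      by simp
    then show ?thesis
      by (rule has_field_derivative_transform_within[where d=1]) (use that along in auto)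
  qed
  show "((\<lambda>t. e * tau t) has_real_derivative 2 * e * t^2) (at t)" for t
    unfolding tau_def by (auto intro!: derivative_eq_intros)
qed (auto intro!: continuous_intros continuous_on_compose2[OF continuous_on_apply_bcontfun])

section \<open>The coupled transport system\<close>

text \<open>With R = t^2 * r and S = t^2 * s, the equations for R and S with source terms t * k1 and t * k2
  become r = char_integral 1 ((r - s) / 2 + k1) and s = char_integral (-1) ((s - r) / 2 + k2).\<close>
definition coupled_map :: "bcfun \<times> bcfun \<Rightarrow> bcfun \<times> bcfun \<Rightarrow> bcfun \<times> bcfun" where
  "coupled_map k w =
     (char_integral 1 ((1/2) *\<^sub>R (fst w - snd w) + fst k),
      char_integral (-1) ((1/2) *\<^sub>R (snd w - fst w) + snd k))"

lemma sqrt_sum_squares_le_half: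
  fixes a b d1 d2 :: real
  assumes "0 \<le> d1" "0 \<le> d2" "d1 \<le> (a + b) / 4" "d2 \<le> (a + b) / 4"
  shows "sqrt (d1^2 + d2^2) \<le> 1/2 * sqrt (a^2 + b^2)"
proof -
  have "d1^2 \<le> ((a + b) / 4)^2" "d2^2 \<le> ((a + b) / 4)^2"
    using assms by (auto intro!: power_mono)
  then have "d1^2 + d2^2 \<le> 2 * ((a + b) / 4)^2"
    by linarith
  also have "\<dots> \<le> (a^2 + b^2) / 4"
    using sum_squares_ge_zero[of "a - b" 0] by (simp add: power2_eq_square field_simps)
  finally show ?thesis
    by (simp add: real_sqrt_divide real_le_rsqrt)
qed

lemma dist_char_integral_le:
  "dist (char_integral e ((1/2) *\<^sub>R (a - b) + k)) (char_integral e ((1/2) *\<^sub>R (a' - b') + k))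
    \<le> (dist a a' + dist b b') / 4"
proof -
  interpret bounded_linear "char_integral e"
    by (rule bounded_linear_char_integral)
  have "dist (char_integral e ((1/2) *\<^sub>R (a - b) + k)) (char_integral e ((1/2) *\<^sub>R (a' - b') + k))
      = norm (char_integral e ((1/2) *\<^sub>R ((a - a') - (b - b'))))"
    by (simp add: dist_norm algebra_simps flip: diff)
  also have "\<dots> \<le> norm ((a - a') - (b - b')) / 4"
    using norm_char_integral_le[of e "(1/2) *\<^sub>R ((a - a') - (b - b'))"] by simp
  also have "\<dots> \<le> (dist a a' + dist b b') / 4"
    using norm_triangle_ineq4[of "a - a'" "b - b'"] by (simp add: dist_norm)
  finally show ?thesis .
qed

lemma dist_coupled_map_le: "dist (coupled_map k w) (coupled_map k w') \<le> 1/2 * dist w w'"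
proof -
  have "dist (coupled_map k w) (coupled_map k w')
      = sqrt ((dist (char_integral 1 ((1/2) *\<^sub>R (fst w - snd w) + fst k))
                    (char_integral 1 ((1/2) *\<^sub>R (fst w' - snd w') + fst k)))^2
            + (dist (char_integral (-1) ((1/2) *\<^sub>R (snd w - fst w) + snd k))
                    (char_integral (-1) ((1/2) *\<^sub>R (snd w' - fst w') + snd k)))^2)"
    by (simp add: coupled_map_def dist_Pair_Pair)
  also have "\<dots> \<le> 1/2 * sqrt ((dist (fst w) (fst w'))^2 + (dist (snd w) (snd w'))^2)"
    using dist_char_integral_le[of 1 "fst w" "snd w" "fst k" "fst w'" "snd w'"]
      dist_char_integral_le[of "-1" "snd w" "fst w" "snd k" "snd w'" "fst w'"]
    by (intro sqrt_sum_squares_le_half) (auto simp: dist_commute)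
  also have "\<dots> = 1/2 * dist w w'"
    by (simp add: dist_prod_def)
  finally show ?thesis .
qed

definition coupled_solution :: "bcfun \<times> bcfun \<Rightarrow> bcfun \<times> bcfun" where
  "coupled_solution k = (THE w. coupled_map k w = w)"

lemma coupled_map_unique_fixpoint: "\<exists>!w. coupled_map k w = w"
  by (rule banach_fix_type[where c="1/2"]) (use dist_coupled_map_le in auto)

lemma coupled_map_coupled_solution: "coupled_map k (coupled_solution k) = coupled_solution k"
  unfolding coupled_solution_def by (rule theI'[OF coupled_map_unique_fixpoint])

lemma coupled_solution_eqI: "coupled_map k w = w \<Longrightarrow> coupled_solution k = w"
  using coupled_map_unique_fixpoint coupled_map_coupled_solution by metis

lemma coupled_map_add: "coupled_map (k + k') (w + w') = coupled_map k w + coupled_map k' w'"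
  and coupled_map_scaleR: "coupled_map (c *\<^sub>R k) (c *\<^sub>R w) = c *\<^sub>R coupled_map k w"
proof -
  interpret K1: bounded_linear "char_integral 1"
    by (rule bounded_linear_char_integral)
  interpret K2: bounded_linear "char_integral (-1)"
    by (rule bounded_linear_char_integral)
  show "coupled_map (k + k') (w + w') = coupled_map k w + coupled_map k' w'"
    unfolding coupled_map_def by (simp add: algebra_simps flip: K1.add K2.add)
  show "coupled_map (c *\<^sub>R k) (c *\<^sub>R w) = c *\<^sub>R coupled_map k w"
    unfolding coupled_map_def by (simp add: algebra_simps flip: K1.scaleR K2.scaleR)
qed

lemma norm_coupled_map_0_le: "norm (coupled_map k 0) \<le> norm k / 2"
proof -
  have "norm (coupled_map k 0) = sqrt ((norm (char_integral 1 (fst k)))^2 + (norm (char_integral (-1) (snd k)))^2)"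
    by (simp add: coupled_map_def norm_Pair)
  also have "\<dots> \<le> sqrt ((norm (fst k) / 2)^2 + (norm (snd k) / 2)^2)"
    by (intro real_sqrt_le_mono add_mono power_mono norm_char_integral_le) auto
  also have "\<dots> = norm k / 2"
    by (simp add: norm_prod_def power_divide real_sqrt_divide add_divide_distrib[symmetric])
  finally show ?thesis .
qed

lemma bounded_linear_coupled_solution: "bounded_linear coupled_solution"
proof (rule bounded_linear_intro[where K=1])
  show "coupled_solution (k + k') = coupled_solution k + coupled_solution k'" for k k'
    by (rule coupled_solution_eqI) (simp add: coupled_map_add coupled_map_coupled_solution)
  show "coupled_solution (c *\<^sub>R k) = c *\<^sub>R coupled_solution k" for c k
    by (rule coupled_solution_eqI) (simp add: coupled_map_scaleR coupled_map_coupled_solution)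
  show "norm (coupled_solution k) \<le> norm k * 1" for k
  proof -
    let ?w = "coupled_solution k"
    have "norm ?w \<le> dist (coupled_map k ?w) (coupled_map k 0) + norm (coupled_map k 0)"
      using norm_triangle_sub[of "coupled_map k ?w" "coupled_map k 0"]
      by (simp add: coupled_map_coupled_solution dist_norm)
    also have "\<dots> \<le> norm ?w / 2 + norm k / 2"
      using dist_coupled_map_le[of k ?w 0] norm_coupled_map_0_le[of k] by simp
    finally show ?thesis
      by simp
  qed
qed

lemma coupled_solution_shift_x:
  "coupled_solution (shift_x h a, shift_x h b)
    = (shift_x h (fst (coupled_solution (a, b))), shift_x h (snd (coupled_solution (a, b))))"
proof (rule coupled_solution_eqI)
  have "coupled_map (shift_x h a, shift_x h b) (shift_x h r, shift_x h s)
      = (shift_x h (fst (coupled_map (a, b) (r, s))), shift_x h (snd (coupled_map (a, b) (r, s))))" for r s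
    by (simp add: coupled_map_def flip: shift_x_plus shift_x_minus shift_x_scaleR char_integral_shift_x)
  then show "coupled_map (shift_x h a, shift_x h b)
      (shift_x h (fst (coupled_solution (a, b))), shift_x h (snd (coupled_solution (a, b))))
    = (shift_x h (fst (coupled_solution (a, b))), shift_x h (snd (coupled_solution (a, b))))"
    by (simp add: coupled_map_coupled_solution)
qed

lemma has_x_derivative_coupled_solution:
  assumes "has_x_derivative k1 k1'" "has_x_derivative k2 k2'"
  shows "has_x_derivative (fst (coupled_solution (k1, k2))) (fst (coupled_solution (k1', k2')))"
    and "has_x_derivative (snd (coupled_solution (k1, k2))) (snd (coupled_solution (k1', k2')))"
  using bounded_linear_compose[OF bounded_linear_fst bounded_linear_coupled_solution]
    bounded_linear_compose[OF bounded_linear_snd bounded_linear_coupled_solution]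
  by (auto intro!: has_x_derivative_bounded_linear_pair assms simp: coupled_solution_shift_x)

lemma C1_on_region_subset:
  assumes "C1_on_region D F Fx Ft" "D' \<subseteq> D"
  shows "C1_on_region D' F Fx Ft"
  unfolding C1_on_region_def
proof (intro conjI ballI)
  show "continuous_on D' (\<lambda>p. Fx (fst p) (snd p))" "continuous_on D' (\<lambda>p. Ft (fst p) (snd p))"
    using assms continuous_on_subset unfolding C1_on_region_def by blast+
  show "case p of (x, t) \<Rightarrow> ((\<lambda>p. F (fst p) (snd p)) has_derivative (\<lambda>h. Fx x t * fst h + Ft x t * snd h))
      (at (x, t) within D')" if "p \<in> D'" for p
    using assms that has_derivative_subset unfolding C1_on_region_def by (cases p) blast
qed

lemma lift_x_bounded_extension:
  assumes "a < b" "Ck_on_interval 3 a b f"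
  shows has_x_derivative_lift_x_bounded_extension:
      "i < 2 \<Longrightarrow> has_x_derivative (lift_x (bounded_extension a b f i)) (lift_x (bounded_extension a b f (Suc i)))"
    and lift_x_bounded_extension_apply:
      "i < 3 \<Longrightarrow> x \<in> {a..b} \<Longrightarrow> lift_x (bounded_extension a b f i) (x, t) = f i x"
proof -
  note deriv = has_real_derivative_bounded_extension[OF assms]
  note bounded = bounded_range_bounded_extension[OF assms(2)]
  show "has_x_derivative (lift_x (bounded_extension a b f i)) (lift_x (bounded_extension a b f (Suc i)))"
    if "i < 2"
    using that
    by (intro has_x_derivative_lift_x[where g''="bounded_extension a b f (Suc (Suc i))"] deriv bounded) auto
  show "lift_x (bounded_extension a b f i) (x, t) = f i x" if "i < 3" "x \<in> {a..b}"
  proof -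
    have "continuous_on UNIV (bounded_extension a b f i)"
      using deriv that(1) by (intro continuous_at_imp_continuous_on ballI DERIV_isCont) auto
    then show ?thesis
      using that bounded[of i] by (simp add: lift_x_apply bounded_extension_eq)
  qed
qed

lemma transport_system_solution:
  fixes \<delta> :: real
  assumes "has_x_derivative k1 k1'" "has_x_derivative k2 k2'" "has_x_derivative h h'"
  obtains R Rx Rt S Sx St W Wx Wt where
    "C1_on_region (UNIV \<times> {0..\<delta>}) R Rx Rt" "C1_on_region (UNIV \<times> {0..\<delta>}) S Sx St"
    "C1_on_region (UNIV \<times> {0..\<delta>}) W Wx Wt"
    "\<And>x t. t \<in> {0<..\<delta>} \<Longrightarrow> Rt x t + 2*t^2 * Rx x t = (R x t - S x t) / (2*t) + t * k1 (x, t)"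
    "\<And>x t. t \<in> {0<..\<delta>} \<Longrightarrow> St x t - 2*t^2 * Sx x t = (S x t - R x t) / (2*t) + t * k2 (x, t)"
    "\<And>x t. t \<in> {0<..\<delta>} \<Longrightarrow> Wt x t - 2*t^2 * Wx x t = - 2*t * (R x t + h (x, t))"
    "\<And>x. R x 0 = 0 \<and> S x 0 = 0 \<and> W x 0 = 0 \<and> Rt x 0 = 0 \<and> St x 0 = 0 \<and> Wt x 0 = 0"
proof -
  define r s where "r = fst (coupled_solution (k1, k2))" and "s = snd (coupled_solution (k1, k2))"
  define r' s' where "r' = fst (coupled_solution (k1', k2'))" and "s' = snd (coupled_solution (k1', k2'))"
  define gR gS gW where "gR = (1/2) *\<^sub>R (r - s) + k1" and "gS = (1/2) *\<^sub>R (s - r) + k2"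
    and "gW = (-2) *\<^sub>R (tpow_mult \<delta> 2 r + h)"
  have r: "char_integral 1 gR = r" and s: "char_integral (-1) gS = s"
    using coupled_map_coupled_solution[of "(k1, k2)"]
    by (simp_all add: coupled_map_def r_def s_def gR_def gS_def prod_eq_iff)
  have "has_x_derivative r r'" "has_x_derivative s s'"
    unfolding r_def s_def r'_def s'_def by (intro has_x_derivative_coupled_solution assms)+
  moreover have "has_x_derivative (char_integral (-1) gW) (char_integral (-1) ((-2) *\<^sub>R (tpow_mult \<delta> 2 r' + h')))"
    unfolding gW_def
    by (intro has_x_derivative_char_integral has_x_derivative_scaleR has_x_derivative_add
        has_x_derivative_tpow_mult assms calculation)
  ultimately have C1: "C1_on_region (UNIV \<times> {0..\<delta>}) (\<lambda>x t. t^2 * r (x, t)) (\<lambda>x t. t^2 * r' (x, t))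
      (\<lambda>x t. t * gR (x, t) - 2 * 1 * t^2 * (t^2 * r' (x, t)))"
    "C1_on_region (UNIV \<times> {0..\<delta>}) (\<lambda>x t. t^2 * s (x, t)) (\<lambda>x t. t^2 * s' (x, t))
      (\<lambda>x t. t * gS (x, t) - 2 * (-1) * t^2 * (t^2 * s' (x, t)))"
    "C1_on_region (UNIV \<times> {0..\<delta>}) (\<lambda>x t. t^2 * char_integral (-1) gW (x, t))
      (\<lambda>x t. t^2 * char_integral (-1) ((-2) *\<^sub>R (tpow_mult \<delta> 2 r' + h')) (x, t))
      (\<lambda>x t. t * gW (x, t) - 2 * (-1) * t^2 * (t^2 * char_integral (-1) ((-2) *\<^sub>R (tpow_mult \<delta> 2 r' + h')) (x, t)))"
    using C1_on_region_char_integral[of 1 gR r' \<delta>] C1_on_region_char_integral[of "-1" gS s' \<delta>]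
      C1_on_region_char_integral[of "-1" gW _ \<delta>] by (simp_all add: r s)
  have sources: "t * gR (x, t) = (t^2 * r (x, t) - t^2 * s (x, t)) / (2*t) + t * k1 (x, t)"
    "t * gS (x, t) = (t^2 * s (x, t) - t^2 * r (x, t)) / (2*t) + t * k2 (x, t)"
    "t * gW (x, t) = - 2*t * (t^2 * r (x, t) + h (x, t))" if "t \<in> {0<..\<delta>}" for x t
    using that by (auto simp: gR_def gS_def gW_def tpow_mult_apply power2_eq_square field_simps)
  show ?thesis
    by (rule that[OF C1]) (use sources in simp_all)
qed

lemma transport_system_solution_on:
  assumes D: "D \<subseteq> X \<times> {0..\<delta>}"
    and derivs: "has_x_derivative k1 k1'" "has_x_derivative k2 k2'" "has_x_derivative h h'"
    and sources: "\<And>x t. x \<in> X \<Longrightarrow> t \<in> {0..\<delta>} \<Longrightarrow> t * k1 (x, t) = - f1 x t"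
      "\<And>x t. x \<in> X \<Longrightarrow> t \<in> {0..\<delta>} \<Longrightarrow> t * k2 (x, t) = f2 x t"
      "\<And>x t. x \<in> X \<Longrightarrow> h (x, t) = f3 x t"
  shows "\<exists>R Rx Rt S Sx St W Wx Wt.
    C1_on_region D R Rx Rt \<and> C1_on_region D S Sx St \<and> C1_on_region D W Wx Wt \<and>
    (\<forall>(x, t)\<in>D. t > 0 \<longrightarrow>
       Rt x t + 2*t^2 * Rx x t = (R x t - S x t) / (2*t) - f1 x t \<and>
       St x t - 2*t^2 * Sx x t = (S x t - R x t) / (2*t) + f2 x t \<and>
       Wt x t - 2*t^2 * Wx x t = - 2*t * (R x t + f3 x t)) \<and>
    (\<forall>x\<in>X. R x 0 = 0 \<and> S x 0 = 0 \<and> W x 0 = 0 \<and> Rt x 0 = 0 \<and> St x 0 = 0 \<and> Wt x 0 = 0)"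
proof -
  obtain R Rx Rt S Sx St W Wx Wt where C1: "C1_on_region (UNIV \<times> {0..\<delta>}) R Rx Rt"
      "C1_on_region (UNIV \<times> {0..\<delta>}) S Sx St" "C1_on_region (UNIV \<times> {0..\<delta>}) W Wx Wt"
    and eqs: "\<And>x t. t \<in> {0<..\<delta>} \<Longrightarrow> Rt x t + 2*t^2 * Rx x t = (R x t - S x t) / (2*t) + t * k1 (x, t)"
      "\<And>x t. t \<in> {0<..\<delta>} \<Longrightarrow> St x t - 2*t^2 * Sx x t = (S x t - R x t) / (2*t) + t * k2 (x, t)"
      "\<And>x t. t \<in> {0<..\<delta>} \<Longrightarrow> Wt x t - 2*t^2 * Wx x t = - 2*t * (R x t + h (x, t))"
    and init: "\<And>x. R x 0 = 0 \<and> S x 0 = 0 \<and> W x 0 = 0 \<and> Rt x 0 = 0 \<and> St x 0 = 0 \<and> Wt x 0 = 0"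
    using transport_system_solution[where \<delta>=\<delta>, OF derivs] by blast
  have "D \<subseteq> UNIV \<times> {0..\<delta>}"
    using D by auto
  show ?thesis
  proof (intro exI conjI)
    show "C1_on_region D R Rx Rt" "C1_on_region D S Sx St" "C1_on_region D W Wx Wt"
      using C1[THEN C1_on_region_subset[OF _ \<open>D \<subseteq> UNIV \<times> {0..\<delta>}\<close>]] by auto
    show "\<forall>(x, t)\<in>D. t > 0 \<longrightarrow>
        Rt x t + 2*t^2 * Rx x t = (R x t - S x t) / (2*t) - f1 x t \<and>
        St x t - 2*t^2 * Sx x t = (S x t - R x t) / (2*t) + f2 x t \<and>
        Wt x t - 2*t^2 * Wx x t = - 2*t * (R x t + f3 x t)"
    proof clarify
      fix x t
      assume "(x, t) \<in> D" "t > 0"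
      with D have "x \<in> X" "t \<in> {0..\<delta>}" "t \<in> {0<..\<delta>}"
        by auto
      then show "Rt x t + 2*t^2 * Rx x t = (R x t - S x t) / (2*t) - f1 x t \<and>
          St x t - 2*t^2 * Sx x t = (S x t - R x t) / (2*t) + f2 x t \<and>
          Wt x t - 2*t^2 * Wx x t = - 2*t * (R x t + f3 x t)"
        using eqs[where x=x and t=t] sources[of x t] by simp
    qed
    show "\<forall>x\<in>X. R x 0 = 0 \<and> S x 0 = 0 \<and> W x 0 = 0 \<and> Rt x 0 = 0 \<and> St x 0 = 0 \<and> Wt x 0 = 0"
      using init by blast
  qed
qed

lemma bounded_source_terms:
  assumes "x1 < x2" "Ck_on_interval 4 x1 x2 u0" "Ck_on_interval 3 x1 x2 u1"
  obtains k1 k1' k2 k2' h h' where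
    "has_x_derivative k1 k1'" "has_x_derivative k2 k2'" "has_x_derivative h h'"
    "\<And>x t. x \<in> {x1..x2} \<Longrightarrow> t \<in> {0..\<delta>} \<Longrightarrow> t * k1 (x, t) = - (2*t^2 * (u1 1 x + u0 2 x * t))"
    "\<And>x t. x \<in> {x1..x2} \<Longrightarrow> t \<in> {0..\<delta>} \<Longrightarrow> t * k2 (x, t) = 2*t^2 * (u1 1 x - u0 2 x * t)"
    "\<And>x t. x \<in> {x1..x2} \<Longrightarrow> h (x, t) = u1 0 x"
proof -
  have u0': "Ck_on_interval 3 x1 x2 (\<lambda>j. u0 (Suc j))"
    using assms(2) by (simp add: Ck_on_interval_def)
  define U V where "U i = lift_x (bounded_extension x1 x2 u1 i)"
    and "V i = lift_x (bounded_extension x1 x2 (\<lambda>j. u0 (Suc j)) i)" for i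
  define k1 k2 where "k1 = (-2) *\<^sub>R (tpow_mult \<delta> 1 (U 1) + tpow_mult \<delta> 2 (V 1))"
    and "k2 = 2 *\<^sub>R tpow_mult \<delta> 1 (U 1) - 2 *\<^sub>R tpow_mult \<delta> 2 (V 1)"
  have dU: "has_x_derivative (U 0) (U 1)" "has_x_derivative (U 1) (U 2)"
    and dV: "has_x_derivative (V 1) (V 2)"
    using has_x_derivative_lift_x_bounded_extension[OF assms(1,3), of 0]
      has_x_derivative_lift_x_bounded_extension[OF assms(1,3), of 1]
      has_x_derivative_lift_x_bounded_extension[OF assms(1) u0', of 1]
    by (simp_all add: U_def V_def numeral_2_eq_2)
  have dk1: "has_x_derivative k1 ((-2) *\<^sub>R (tpow_mult \<delta> 1 (U 2) + tpow_mult \<delta> 2 (V 2)))"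
    unfolding k1_def by (intro has_x_derivative_scaleR has_x_derivative_add has_x_derivative_tpow_mult dU dV)
  have dk2: "has_x_derivative k2 (2 *\<^sub>R tpow_mult \<delta> 1 (U 2) - 2 *\<^sub>R tpow_mult \<delta> 2 (V 2))"
    unfolding k2_def by (intro has_x_derivative_scaleR has_x_derivative_diff has_x_derivative_tpow_mult dU dV)
  show ?thesis
  proof (rule that[OF dk1 dk2 dU(1)])
    fix x t
    assume x: "x \<in> {x1..x2}"
    have U: "U 0 (x, t) = u1 0 x" "U 1 (x, t) = u1 1 x" "V 1 (x, t) = u0 2 x"
      using lift_x_bounded_extension_apply[OF assms(1,3), of 0 x t]
        lift_x_bounded_extension_apply[OF assms(1,3), of 1 x t]
        lift_x_bounded_extension_apply[OF assms(1) u0', of 1 x t] x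
      by (simp_all add: U_def V_def numeral_2_eq_2)
    then show "U 0 (x, t) = u1 0 x"
      by simp
    assume "t \<in> {0..\<delta>}"
    then have "max 0 (min t \<delta>) = t"
      by simp
    with U show "t * k1 (x, t) = - (2*t^2 * (u1 1 x + u0 2 x * t))" "t * k2 (x, t) = 2*t^2 * (u1 1 x - u0 2 x * t)"
      by (simp_all only: k1_def k2_def tpow_mult_apply plus_bcontfun.rep_eq minus_bcontfun.rep_eq
          scaleR_bcontfun.rep_eq) (simp_all add: power2_eq_square algebra_simps)
  qed
qed

lemma region_D_subset: "region_D a b \<delta> \<subseteq> {a..b} \<times> {0..\<delta>}"
proof
  fix p
  assume "p \<in> region_D a b \<delta>"
  then obtain x t where p: "p = (x, t)" and t: "0 \<le> t" "t \<le> \<delta>"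
    and x: "a + 2/3 * t^3 \<le> x" "x \<le> b - 2/3 * t^3"
    by (auto simp: region_D_def)
  have "0 \<le> 2/3 * t^3"
    using t by simp
  with t x show "p \<in> {a..b} \<times> {0..\<delta>}"
    unfolding p mem_Times_iff atLeastAtMost_iff fst_conv snd_conv by (intro conjI; linarith)
qed

theorem theoremA2:
  fixes x1 x2 :: real and u0 u1 :: "nat \<Rightarrow> real \<Rightarrow> real"
  assumes "x1 < x2"
    and "Ck_on_interval 4 x1 x2 u0"
    and "Ck_on_interval 3 x1 x2 u1"
  shows "\<exists>\<delta>>0. \<delta> \<le> root 3 (3 * (x2 - x1) / 4) \<and>
     (\<exists>R Rx Rt S Sx St W Wx Wt.
        C1_on_region (region_D x1 x2 \<delta>) R Rx Rt \<and>
        C1_on_region (region_D x1 x2 \<delta>) S Sx St \<and>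
        C1_on_region (region_D x1 x2 \<delta>) W Wx Wt \<and>
        (\<forall>(x,t)\<in>region_D x1 x2 \<delta>. t > 0 \<longrightarrow>
           Rt x t + 2*t^2 * Rx x t = (R x t - S x t) / (2*t) - 2*t^2 * (u1 1 x + u0 2 x * t) \<and>
           St x t - 2*t^2 * Sx x t = (S x t - R x t) / (2*t) + 2*t^2 * (u1 1 x - u0 2 x * t) \<and>
           Wt x t - 2*t^2 * Wx x t = - 2*t * (R x t + u1 0 x)) \<and>
        (\<forall>x\<in>{x1..x2}. R x 0 = 0 \<and> S x 0 = 0 \<and> W x 0 = 0 \<and>
                       Rt x 0 = 0 \<and> St x 0 = 0 \<and> Wt x 0 = 0))"
proof -
  define \<delta> where "\<delta> = root 3 (3 * (x2 - x1) / 4)"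
  obtain k1 k1' k2 k2' h h' where derivs: "has_x_derivative k1 k1'" "has_x_derivative k2 k2'" "has_x_derivative h h'"
    and sources: "\<And>x t. x \<in> {x1..x2} \<Longrightarrow> t \<in> {0..\<delta>} \<Longrightarrow> t * k1 (x, t) = - (2*t^2 * (u1 1 x + u0 2 x * t))"
      "\<And>x t. x \<in> {x1..x2} \<Longrightarrow> t \<in> {0..\<delta>} \<Longrightarrow> t * k2 (x, t) = 2*t^2 * (u1 1 x - u0 2 x * t)"
      "\<And>x t. x \<in> {x1..x2} \<Longrightarrow> h (x, t) = u1 0 x"
    using bounded_source_terms[OF assms, where \<delta>=\<delta>] by blast
  show ?thesis
  proof (intro exI[of _ \<delta>] conjI)
    show "\<delta> > 0" "\<delta> \<le> root 3 (3 * (x2 - x1) / 4)"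
      using assms(1) by (simp_all add: \<delta>_def)
  qed (rule transport_system_solution_on[OF region_D_subset derivs sources])
qed

end
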